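(* Let $A$ and $B$ be disjoint cubic graphs with $v(A)\equiv 2\pmod 6$ and $v(B)\equiv 4\pmod 6$, let $a=a_1a_2\in E(A)$ and $b=b_1b_2\in E(B)$, and suppose $B-b_1$ has no $\Lambda$-factor. Let $G=AabB$. Then $v(G)\equiv 0\pmod 6$ and $G$ has no $\Lambda$-factor avoiding the edge $a_2b_2$.
   Context: Graphs are finite, undirected, without loops or multiple edges; $v(G)=|V(G)|$. For disjoint graphs $A,B$ with $a=a_1a_2\in E(A)$, $b=b_1b_2\in E(B)$, $AabB$ is obtained from $(A-a)\cup(B-b)$ (edge deletions) by adding the new edges $a_1b_1$ and $a_2b_2$. $B-b_1$ denotes deletion of the vertex $b_1$. A $\Lambda$-factor of a graph is a spanning subgraph each of whose components is a path on 3 vertices; it avoids an edge $e$ if $e$ is not one of its edges. *)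

theory Defs
  imports Main
begin

definition graph :: "'a set \<Rightarrow> 'a set set \<Rightarrow> bool" where
  "graph V E \<longleftrightarrow> finite V \<and> (\<forall>e\<in>E. \<exists>x y. x \<in> V \<and> y \<in> V \<and> x \<noteq> y \<and> e = {x, y})"

definition degree :: "'a set set \<Rightarrow> 'a \<Rightarrow> nat" where
  "degree E v = card {e \<in> E. v \<in> e}"

definition cubic :: "'a set \<Rightarrow> 'a set set \<Rightarrow> bool" where
  "cubic V E \<longleftrightarrow> graph V E \<and> (\<forall>v\<in>V. degree E v = 3)"

definition del_vertex_V :: "'a set \<Rightarrow> 'a \<Rightarrow> 'a set" where
  "del_vertex_V V v = V - {v}"

definition del_vertex_E :: "'a set set \<Rightarrow> 'a \<Rightarrow> 'a set set" where
  "del_vertex_E E v = {e \<in> E. v \<notin> e}"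

definition component :: "'a set set \<Rightarrow> 'a \<Rightarrow> 'a set" where
  "component F v = {u. (\<lambda>x y. {x, y} \<in> F)\<^sup>*\<^sup>* v u}"

definition Lambda_factor :: "'a set \<Rightarrow> 'a set set \<Rightarrow> 'a set set \<Rightarrow> bool" where
  "Lambda_factor V E F \<longleftrightarrow> F \<subseteq> E \<and>
     (\<forall>v\<in>V. \<exists>x y z. distinct [x, y, z] \<and> component F v = {x, y, z} \<and>
        {e \<in> F. e \<subseteq> {x, y, z}} = {{x, y}, {y, z}})"

definition has_Lambda_factor :: "'a set \<Rightarrow> 'a set set \<Rightarrow> bool" where
  "has_Lambda_factor V E \<longleftrightarrow> (\<exists>F. Lambda_factor V E F)"

definition join_V :: "'a set \<Rightarrow> 'a set \<Rightarrow> 'a set" where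
  "join_V VA VB = VA \<union> VB"

definition join_E :: "'a set set \<Rightarrow> 'a \<Rightarrow> 'a \<Rightarrow> 'a \<Rightarrow> 'a \<Rightarrow> 'a set set \<Rightarrow> 'a set set" where
  "join_E EA a1 a2 b1 b2 EB =
     (EA - {{a1, a2}}) \<union> (EB - {{b1, b2}}) \<union> {{a1, b1}, {a2, b2}}"

end

theory Submission
  imports Defs
begin

text \<open>The number of vertices of G is |A| + |B| \<equiv> 2 + 4 (mod 6). Suppose F is a \<Lambda>-factor of G
  avoiding a2b2, and let C be the F-component of b1. The only edge of G between A and B that
  F can use is a1b1, so no F-edge leaves B \<union> C, hence none leaves B - C either. Thus B - C is
  a union of F-components of size 3, so |B \<inter> C| \<equiv> |B| \<equiv> 1 (mod 3); as 1 \<le> |B \<inter> C| \<le> 3 this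
  forces B \<inter> C = {b1}, and the edges of F inside B - b1 form a \<Lambda>-factor of B - b1.
  Neither the degrees of A and B nor the edge a1a2 play any role.\<close>

definition edge_closed :: "'a set set \<Rightarrow> 'a set \<Rightarrow> bool" where
  "edge_closed F S \<longleftrightarrow> (\<forall>u w. {u, w} \<in> F \<longrightarrow> u \<in> S \<longrightarrow> w \<in> S)"

lemma edge_closed_Diff:
  "edge_closed F T \<Longrightarrow> edge_closed F C \<Longrightarrow> edge_closed F (T - C)"
  unfolding edge_closed_def by (metis Diff_iff insert_commute)

lemma symp_edge_relation: "symp (\<lambda>x y. {x, y} \<in> F)"
  by (auto intro: sympI simp: insert_commute)

lemma component_refl: "v \<in> component F v"
  by (simp add: component_def)

lemma component_sym: "u \<in> component F v \<Longrightarrow> v \<in> component F u"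
  using sympD[OF symp_rtranclp[OF symp_edge_relation]] by (fastforce simp: component_def)

lemma component_eq: "u \<in> component F v \<Longrightarrow> component F u = component F v"
  using component_sym by (fastforce simp: component_def intro: rtranclp_trans)

lemma edge_closed_component: "edge_closed F (component F v)"
  by (auto simp: edge_closed_def component_def intro: rtranclp.rtrancl_into_rtrancl)

lemma component_subset_edge_closed:
  assumes "edge_closed F S" and "v \<in> S"
  shows "component F v \<subseteq> S"
proof
  fix u assume "u \<in> component F v"
  then have "(\<lambda>x y. {x, y} \<in> F)\<^sup>*\<^sup>* v u" by (simp add: component_def)
  then show "u \<in> S"
    by induction (use assms in \<open>auto simp: edge_closed_def\<close>)
qed

lemma component_restrict_edge_closed:
  assumes "edge_closed F S" and "v \<in> S"
  shows "component {e \<in> F. e \<subseteq> S} v = component F v"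
proof
  show "component {e \<in> F. e \<subseteq> S} v \<subseteq> component F v"
    unfolding component_def by (auto elim: rtranclp_mono[THEN predicate2D, rotated])
next
  show "component F v \<subseteq> component {e \<in> F. e \<subseteq> S} v"
  proof
    fix u assume "u \<in> component F v"
    then have "(\<lambda>x y. {x, y} \<in> F)\<^sup>*\<^sup>* v u" by (simp add: component_def)
    then have "(\<lambda>x y. {x, y} \<in> {e \<in> F. e \<subseteq> S})\<^sup>*\<^sup>* v u \<and> u \<in> S"
    proof induction
      case base
      show ?case using assms(2) by simp
    next
      case (step y z)
      then have "z \<in> S" using assms(1) by (auto simp: edge_closed_def)
      with step show ?case by (auto intro: rtranclp.rtrancl_into_rtrancl)
    qed
    then show "u \<in> component {e \<in> F. e \<subseteq> S} v" by (simp add: component_def)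
  qed
qed

lemma Lambda_factor_card_component:
  "Lambda_factor V E F \<Longrightarrow> v \<in> V \<Longrightarrow> card (component F v) = 3"
  unfolding Lambda_factor_def by fastforce

lemma Lambda_factor_card_edge_closed_mod_3:
  assumes F: "Lambda_factor V E F" and "finite S" "S \<subseteq> V" "edge_closed F S"
  shows "card S mod 3 = 0"
proof -
  let ?C = "component F ` S"
  have union: "\<Union>?C = S"
  proof
    show "\<Union>?C \<subseteq> S"
      using component_subset_edge_closed[OF \<open>edge_closed F S\<close>] by (simp add: UN_subset_iff)
    show "S \<subseteq> \<Union>?C"
      by (meson UN_I component_refl subsetI)
  qed
  have "card (\<Union>?C) = 3 * card ?C"
  proof (rule card_partition[symmetric])
    show "finite ?C" "finite (\<Union>?C)" using \<open>finite S\<close> union by simp_all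
    show "card c = 3" if "c \<in> ?C" for c
      using that \<open>S \<subseteq> V\<close> Lambda_factor_card_component[OF F] by auto
    show "c1 \<inter> c2 = {}" if c: "c1 \<in> ?C" "c2 \<in> ?C" "c1 \<noteq> c2" for c1 c2
    proof -
      obtain v1 v2 where "c1 = component F v1" "c2 = component F v2" using c by blast
      with \<open>c1 \<noteq> c2\<close> show ?thesis by (metis component_eq disjoint_iff)
    qed
  qed
  then show ?thesis using union by simp
qed

lemma Lambda_factor_restrict_edge_closed:
  assumes F: "Lambda_factor V E F" and "S \<subseteq> V" "edge_closed F S"
    and "{e \<in> F. e \<subseteq> S} \<subseteq> E'"
  shows "Lambda_factor S E' {e \<in> F. e \<subseteq> S}"
  unfolding Lambda_factor_def
proof (intro conjI ballI)
  show "{e \<in> F. e \<subseteq> S} \<subseteq> E'" by fact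
  fix v assume "v \<in> S"
  then obtain x y z where xyz: "distinct [x, y, z]" "component F v = {x, y, z}"
      "{e \<in> F. e \<subseteq> {x, y, z}} = {{x, y}, {y, z}}"
    using F \<open>S \<subseteq> V\<close> unfolding Lambda_factor_def by blast
  have "{x, y, z} \<subseteq> S"
    using component_subset_edge_closed[OF \<open>edge_closed F S\<close> \<open>v \<in> S\<close>] xyz(2) by simp
  then have "{e \<in> {e \<in> F. e \<subseteq> S}. e \<subseteq> {x, y, z}} = {{x, y}, {y, z}}"
    using xyz(3) by blast
  with xyz show "\<exists>x y z. distinct [x, y, z] \<and> component {e \<in> F. e \<subseteq> S} v = {x, y, z} \<and>
      {e \<in> {e \<in> F. e \<subseteq> S}. e \<subseteq> {x, y, z}} = {{x, y}, {y, z}}"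
    using component_restrict_edge_closed[OF \<open>edge_closed F S\<close> \<open>v \<in> S\<close>] by blast
qed

lemma graph_edge_subset: "graph V E \<Longrightarrow> e \<in> E \<Longrightarrow> e \<subseteq> V"
  unfolding graph_def by fastforce

lemma graph_edge_nonempty: "graph V E \<Longrightarrow> e \<in> E \<Longrightarrow> e \<noteq> {}"
  unfolding graph_def by fastforce

lemma Lambda_factor_subset: "Lambda_factor V E F \<Longrightarrow> F \<subseteq> E"
  by (simp add: Lambda_factor_def)

lemma join_E_edge_cases:
  assumes "e \<in> join_E EA a1 a2 b1 b2 EB" and "e \<noteq> {a2, b2}"
  shows "e \<in> EA \<or> e \<in> EB \<or> e = {a1, b1}"
  using assms unfolding join_E_def by blast

lemma edge_closed_join_side:
  assumes A: "graph VA EA" and B: "graph VB EB" and disj: "VA \<inter> VB = {}"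
    and F: "F \<subseteq> join_E EA a1 a2 b1 b2 EB" and "{a2, b2} \<notin> F"
  shows "edge_closed F (VB \<union> component F b1)"
  unfolding edge_closed_def
proof (intro allI impI)
  let ?C = "component F b1"
  have closed_C: "edge_closed F ?C" by (rule edge_closed_component)
  fix u w assume uw: "{u, w} \<in> F" and u: "u \<in> VB \<union> ?C"
  have "{u, w} \<in> join_E EA a1 a2 b1 b2 EB" using uw F by (rule subsetD[rotated])
  moreover have "{u, w} \<noteq> {a2, b2}" using uw \<open>{a2, b2} \<notin> F\<close> by auto
  ultimately have cases: "{u, w} \<in> EA \<or> {u, w} \<in> EB \<or> {u, w} = {a1, b1}"
    by (rule join_E_edge_cases)
  show "w \<in> VB \<union> ?C"
  proof (cases "u \<in> ?C")
    case True
    with closed_C uw show ?thesis unfolding edge_closed_def by blast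
  next
    case False
    with u have "u \<in> VB" by simp
    then have "{u, w} \<notin> EA" using graph_edge_subset[OF A] disj by blast
    with cases consider "{u, w} \<in> EB" | "{u, w} = {a1, b1}" by blast
    then show ?thesis
    proof cases
      case 1
      then show ?thesis using graph_edge_subset[OF B] by blast
    next
      case 2
      then have "{b1, a1} \<in> F" using uw by (simp add: insert_commute)
      moreover have "b1 \<in> ?C" by (rule component_refl)
      ultimately have "a1 \<in> ?C" using closed_C unfolding edge_closed_def by blast
      with 2 \<open>b1 \<in> ?C\<close> show ?thesis by (auto simp: doubleton_eq_iff)
    qed
  qed
qed

lemma join_E_subset_del_vertex_E:
  assumes A: "graph VA EA" and disj: "VA \<inter> VB = {}"
    and "e \<in> join_E EA a1 a2 b1 b2 EB" "e \<noteq> {a2, b2}" and e: "e \<subseteq> VB - {b1}"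
  shows "e \<in> del_vertex_E EB b1"
proof -
  have "e \<notin> EA"
  proof
    assume "e \<in> EA"
    then have "e \<subseteq> VA" "e \<noteq> {}" using graph_edge_subset[OF A] graph_edge_nonempty[OF A] by auto
    with e disj show False by blast
  qed
  moreover have "e \<noteq> {a1, b1}" using e by blast
  ultimately have "e \<in> EB" using join_E_edge_cases[OF assms(3,4)] by blast
  with e show ?thesis by (auto simp: del_vertex_E_def)
qed

lemma Int_eq_singleton_if_card_mod_3:
  assumes "finite B" "card B mod 3 = 1" "card C = 3" "b \<in> B \<inter> C"
    and "card (B - C) mod 3 = 0"
  shows "B \<inter> C = {b}"
proof -
  have "finite C" using \<open>card C = 3\<close> by (metis card.infinite zero_neq_numeral)
  then have "card (B - C) = card B - card (B \<inter> C)" by (simp add: card_Diff_subset_Int)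
  moreover have "card (B \<inter> C) \<le> card B" using \<open>finite B\<close> by (simp add: card_mono)
  moreover have "card (B \<inter> C) \<le> 3"
    using \<open>card C = 3\<close> \<open>finite C\<close> card_mono[of C "B \<inter> C"] by simp
  moreover have "card (B \<inter> C) > 0" using \<open>b \<in> B \<inter> C\<close> \<open>finite C\<close> by (auto simp: card_gt_0_iff)
  ultimately have "card (B \<inter> C) = 1" using assms(2,5) by presburger
  with \<open>b \<in> B \<inter> C\<close> show ?thesis by (metis card_1_singletonE singletonD)
qed

lemma Lambda_factor_join_restrict:
  assumes A: "graph VA EA" and B: "graph VB EB" and disj: "VA \<inter> VB = {}"
    and "card VB mod 3 = 1" and "b1 \<in> VB"
    and F: "Lambda_factor (VA \<union> VB) (join_E EA a1 a2 b1 b2 EB) F" and "{a2, b2} \<notin> F"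
  shows "Lambda_factor (VB - {b1}) (del_vertex_E EB b1) {e \<in> F. e \<subseteq> VB - {b1}}"
proof -
  define C where "C = component F b1"
  have "edge_closed F ((VB \<union> C) - C)"
    using edge_closed_join_side[OF A B disj Lambda_factor_subset[OF F] \<open>{a2, b2} \<notin> F\<close>]
      edge_closed_component unfolding C_def by (rule edge_closed_Diff)
  then have closed: "edge_closed F (VB - C)" by (simp add: Un_Diff)
  have finite_VB: "finite VB" using B by (simp add: graph_def)
  have "card C = 3"
    using Lambda_factor_card_component[OF F] \<open>b1 \<in> VB\<close> unfolding C_def by simp
  moreover have "b1 \<in> VB \<inter> C" using \<open>b1 \<in> VB\<close> component_refl unfolding C_def by simp
  moreover have "card (VB - C) mod 3 = 0"
    using Lambda_factor_card_edge_closed_mod_3[OF F _ _ closed] finite_VB by blast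
  ultimately have "VB \<inter> C = {b1}"
    by (rule Int_eq_singleton_if_card_mod_3[OF finite_VB \<open>card VB mod 3 = 1\<close>])
  then have S: "VB - C = VB - {b1}" by blast
  have edges: "{e \<in> F. e \<subseteq> VB - {b1}} \<subseteq> del_vertex_E EB b1"
  proof
    fix e assume e: "e \<in> {e \<in> F. e \<subseteq> VB - {b1}}"
    then have "e \<in> join_E EA a1 a2 b1 b2 EB" using Lambda_factor_subset[OF F] by blast
    moreover have "e \<noteq> {a2, b2}" using e \<open>{a2, b2} \<notin> F\<close> by blast
    ultimately show "e \<in> del_vertex_E EB b1"
      using e by (intro join_E_subset_del_vertex_E[OF A disj]) auto
  qed
  have "VB - {b1} \<subseteq> VA \<union> VB" by blast
  then show ?thesis
    using Lambda_factor_restrict_edge_closed[OF F _ closed[unfolded S] edges] by blast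
qed

theorem mainTheorem12:
  fixes VA VB :: "'a set" and EA EB :: "'a set set" and a1 a2 b1 b2 :: 'a
  assumes "cubic VA EA" and "cubic VB EB" and "VA \<inter> VB = {}"
    and "card VA mod 6 = 2" and "card VB mod 6 = 4"
    and "{a1, a2} \<in> EA" and "{b1, b2} \<in> EB"
    and "\<not> has_Lambda_factor (del_vertex_V VB b1) (del_vertex_E EB b1)"
  shows "card (join_V VA VB) mod 6 = 0 \<and>
    \<not> (\<exists>F. Lambda_factor (join_V VA VB) (join_E EA a1 a2 b1 b2 EB) F \<and> {a2, b2} \<notin> F)"
proof
  have A: "graph VA EA" and B: "graph VB EB"
    using assms(1,2) by (simp_all add: cubic_def)
  have "card (VA \<union> VB) = card VA + card VB"
    using A B assms(3) by (simp add: graph_def card_Un_disjoint)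
  then show "card (join_V VA VB) mod 6 = 0"
    using assms(4,5) unfolding join_V_def by presburger
  have "b1 \<in> VB" using graph_edge_subset[OF B assms(7)] by simp
  moreover have "card VB mod 3 = 1" using assms(5) by presburger
  ultimately show "\<not> (\<exists>F. Lambda_factor (join_V VA VB) (join_E EA a1 a2 b1 b2 EB) F \<and> {a2, b2} \<notin> F)"
    using Lambda_factor_join_restrict[OF A B assms(3)] assms(8)
    unfolding join_V_def has_Lambda_factor_def del_vertex_V_def by blast
qed

end
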